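(* Suppose that $d(p_{r+1}^2) \le 2p_r$ for every $r \ge 1$. Then Legendre's conjecture holds: for every natural number $n \ge 1$ there is a prime strictly between $n^2$ and $(n+1)^2$.
   Context: $p_k$ denotes the $k$-th prime ($p_1=2$, $p_2=3$, \dots). For $r \ge 1$, $d(p_{r+1}^2)$ denotes the maximum of $q'-q$ over all pairs of consecutive primes $q<q'$ with $p_{r+1} \le q < q' \le p_{r+1}^2$ (equivalently, the maximum gap between consecutive integers coprime to $p_r\# = \prod_{i\le r} p_i$ lying in the interval $[p_{r+1}, p_{r+1}^2]$). *)

theory Defs
  imports "HOL-Computational_Algebra.Primes"
begin

text \<open>The k-th prime, 1-indexed: nth_prime 1 = 2, nth_prime 2 = 3, ...\<close>
definition nth_prime :: "nat \<Rightarrow> nat" where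
  "nth_prime k = (LEAST p. prime p \<and> card {q. prime q \<and> q \<le> p} = k)"

definition max_prime_gap :: "nat \<Rightarrow> nat \<Rightarrow> nat" where
  "max_prime_gap a b = Max {q' - q | q q'. prime q \<and> prime q' \<and> a \<le> q \<and> q < q' \<and> q' \<le> b
       \<and> (\<forall>m. q < m \<and> m < q' \<longrightarrow> \<not> prime m)}"

text \<open>d(p_{r+1}^2) from the paper, as a function of r.\<close>
definition d_sq :: "nat \<Rightarrow> nat" where
  "d_sq r = max_prime_gap (nth_prime (r + 1)) ((nth_prime (r + 1))^2)"

end

theory Submission
  imports Defs "HOL.Binomial_Plus"
begin

text \<open>
  If there were no prime between \<open>m\<^sup>2\<close> and \<open>(m+1)\<^sup>2\<close>, the consecutive primes \<open>q < q'\<close>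
  around this interval would satisfy \<open>q < m\<^sup>2\<close> and \<open>(m+1)\<^sup>2 \<le> q'\<close>. Let \<open>p < p'\<close> be the
  consecutive primes with \<open>p\<^sup>2 < q' \<le> p'\<^sup>2\<close>. Since \<open>q' \<le> q\<^sup>2\<close> (a weak form of Bertrand's
  postulate, proved with Erdos' estimate of the central binomial coefficient) we have \<open>p' \<le> q\<close>,
  so the gap from \<open>q\<close> to \<open>q'\<close> lies in \<open>[p', p'\<^sup>2]\<close> and the hypothesis bounds it by \<open>2p\<close>.
  But \<open>q' - q \<le> 2p\<close> is impossible both for \<open>p \<le> m\<close>, where the gap is at least \<open>2m + 2\<close>,
  and for \<open>p > m\<close>, where \<open>q + 2p \<le> (p-1)\<^sup>2 - 1 + 2p = p\<^sup>2 < q'\<close>.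
\<close>

section \<open>Prime factorisation of central binomial coefficients\<close>

lemma multiplicity_less_self:
  assumes "prime (q::nat)" "0 < k"
  shows "multiplicity q k < k"
proof (rule multiplicity_lessI)
  have "k < 2 ^ k" by (rule less_exp)
  also have "\<dots> \<le> q ^ k" using prime_ge_2_nat[OF assms(1)] by (intro power_mono) auto
  finally show "\<not> q ^ k dvd k" using assms(2) by (auto dest: dvd_imp_le)
qed (use assms in auto)

lemma multiplicity_fact_eq_sum:
  assumes "prime (q::nat)" "m \<le> N"
  shows "multiplicity q (fact m :: nat) = (\<Sum>i\<in>{1..N}. m div q ^ i)"
  using assms(2)
proof (induction m)
  case 0
  then show ?case by simp
next
  case (Suc m)
  have Suc_div: "Suc m div q ^ i = m div q ^ i + (if q ^ i dvd Suc m then 1 else 0)" for i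
    by (simp add: div_Suc mod_eq_0_iff_dvd)
  have "q ^ i dvd Suc m \<longleftrightarrow> i \<le> multiplicity q (Suc m)" for i
    by (rule power_dvd_iff_le_multiplicity) (use assms(1) in auto)
  then have "{i\<in>{1..N}. q ^ i dvd Suc m} = {1..multiplicity q (Suc m)}"
    using multiplicity_less_self[OF assms(1), of "Suc m"] Suc.prems
    by (simp add: set_eq_iff) (meson le_trans less_imp_le_nat)
  then have "multiplicity q (Suc m) = (\<Sum>i\<in>{1..N}. if q ^ i dvd Suc m then 1 else 0)"
    by (simp add: sum.If_cases Int_def conj_commute)
  moreover have "multiplicity q (fact (Suc m) :: nat) = multiplicity q (Suc m) + multiplicity q (fact m :: nat)"
    unfolding fact_Suc of_nat_id
    by (rule prime_elem_multiplicity_mult_distrib) (use assms(1) in auto)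
  ultimately show ?case
    using Suc by (simp add: Suc_div sum.distrib)
qed

lemma multiplicity_central_binomial_eq_sum:
  assumes "prime (q::nat)"
  shows "multiplicity q ((2*n) choose n) = (\<Sum>i\<in>{1..2*n}. (2*n) div q ^ i - 2 * (n div q ^ i))"
proof -
  have fact_eq: "fact (2*n) = fact n * fact n * ((2*n) choose n :: nat)"
    using binomial_fact_lemma[of n "2*n"] by simp
  have "multiplicity q (fact (2*n) :: nat) = multiplicity q (fact n * fact n :: nat) + multiplicity q ((2*n) choose n)"
    unfolding fact_eq by (rule prime_elem_multiplicity_mult_distrib) (use assms in auto)
  also have "multiplicity q (fact n * fact n :: nat) = 2 * multiplicity q (fact n :: nat)"
    by (subst prime_elem_multiplicity_mult_distrib) (use assms in auto)
  finally have "multiplicity q ((2*n) choose n) = multiplicity q (fact (2*n) :: nat) - 2 * multiplicity q (fact n :: nat)"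
    by simp
  also have "\<dots> = (\<Sum>i\<in>{1..2*n}. (2*n) div q ^ i) - (\<Sum>i\<in>{1..2*n}. 2 * (n div q ^ i))"
  proof -
    have "multiplicity q (fact (2*n) :: nat) = (\<Sum>i\<in>{1..2*n}. (2*n) div q ^ i)"
      "multiplicity q (fact n :: nat) = (\<Sum>i\<in>{1..2*n}. n div q ^ i)"
      by (rule multiplicity_fact_eq_sum[OF assms]; simp)+
    then show ?thesis by (simp only: sum_distrib_left)
  qed
  also have "\<dots> = (\<Sum>i\<in>{1..2*n}. (2*n) div q ^ i - 2 * (n div q ^ i))"
    by (rule sum_subtractf_nat[symmetric]) (subst div_mult1_eq, simp)
  finally show ?thesis .
qed

lemma double_div_le: "(2*n) div (d::nat) \<le> 2 * (n div d) + 1"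
proof (cases "d = 0")
  case False
  have "n = (n div d) * d + n mod d" by simp
  moreover have "n mod d < d" using False by simp
  moreover have "(2 * (n div d) + 2) * d = 2 * ((n div d) * d) + 2 * d" by (simp add: algebra_simps)
  ultimately have "2*n < (2 * (n div d) + 2) * d" by linarith
  then have "(2*n) div d < 2 * (n div d) + 2" using False by (simp add: div_less_iff_less_mult)
  then show ?thesis by simp
qed simp

lemma prime_power_multiplicity_central_binomial_le:
  assumes "prime (q::nat)" "1 \<le> n"
  shows "q ^ multiplicity q ((2*n) choose n) \<le> 2*n"
proof (rule ccontr)
  define v where "v = multiplicity q ((2*n) choose n)"
  define I where "I = {1..2*n} \<inter> {i. q ^ i \<le> 2*n}"
  assume "\<not> q ^ multiplicity q ((2*n) choose n) \<le> 2*n"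
  then have big: "2*n < q ^ v" unfolding v_def by simp
  have term_le: "(2*n) div q ^ i - 2 * (n div q ^ i) \<le> (if q ^ i \<le> 2*n then 1 else 0)" for i
    using double_div_le[of n "q ^ i"] by (cases "q ^ i \<le> 2*n") auto
  have "v \<le> (\<Sum>i\<in>{1..2*n}. if q ^ i \<le> 2*n then 1 else 0)"
    unfolding v_def multiplicity_central_binomial_eq_sum[OF assms(1)] by (rule sum_mono) (rule term_le)
  also have "\<dots> = card I" unfolding I_def by (simp add: sum.If_cases)
  also have "\<dots> \<le> card {1..v-1}"
  proof (rule card_mono)
    show "I \<subseteq> {1..v-1}"
    proof
      fix i assume "i \<in> I"
      then have "1 \<le> i" "q ^ i < q ^ v" using big by (auto simp: I_def)
      moreover from this(2) have "i < v" by (rule power_less_imp_less_exp[OF prime_gt_1_nat[OF assms(1)]])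
      ultimately show "i \<in> {1..v-1}" by simp
    qed
  qed simp
  finally have "v \<le> v - 1" by simp
  moreover have "v \<noteq> 0" using big assms(2) by (cases v) auto
  ultimately show False by simp
qed

lemma central_binomial_le_power:
  assumes "1 \<le> n" "\<forall>q. prime q \<and> q \<le> 2*n \<longrightarrow> q \<le> x"
  shows "(2*n) choose n \<le> (2*n) ^ x"
proof -
  let ?C = "(2*n) choose n"
  have "prime_factors ?C \<subseteq> {2..x}"
  proof
    fix p assume p: "p \<in> prime_factors ?C"
    have "?C dvd fact (2*n)"
      using binomial_fact_lemma[of n "2*n"] by (metis dvd_triv_right le_add2 mult_2 add_diff_cancel_left')
    then have "p \<le> 2*n" using p prime_dvd_fact_iff[of p "2*n"] by (auto intro: dvd_trans)
    then show "p \<in> {2..x}" using assms(2) p prime_ge_2_nat by auto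
  qed
  then have card_factors: "card (prime_factors ?C) \<le> x"
    using card_mono[of "{2..x}" "prime_factors ?C"] by simp
  have "?C = (\<Prod>p\<in>prime_factors ?C. p ^ multiplicity p ?C)"
    by (rule prime_factorization_nat) simp
  also have "\<dots> \<le> (\<Prod>p\<in>prime_factors ?C. 2*n)"
    by (rule prod_mono) (auto intro: prime_power_multiplicity_central_binomial_le[OF _ assms(1)])
  also have "\<dots> = (2*n) ^ card (prime_factors ?C)" by simp
  also have "\<dots> \<le> (2*n) ^ x" using card_factors assms(1) by (intro power_increasing) auto
  finally show ?thesis .
qed

section \<open>A prime between \<open>x\<close> and \<open>x\<^sup>2\<close>\<close>

lemma four_pow_le_central_binomial:
  assumes "1 \<le> n"
  shows "4 ^ n \<le> 2 * n * ((2*n) choose n)"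
proof -
  have "4 ^ n / (2 * real n) \<le> real ((2*n) choose n)"
    using assms by (intro central_binomial_lower_bound) simp
  then have "(4::real) ^ n \<le> 2 * real n * real ((2*n) choose n)"
    using assms by (simp add: pos_divide_le_eq mult.commute)
  then show ?thesis by (metis of_nat_le_iff of_nat_mult of_nat_numeral of_nat_power)
qed

lemma pow5_le_two_pow: "25 \<le> x \<Longrightarrow> (x::nat) ^ 5 \<le> 2 ^ x"
proof (induction x rule: dec_induct)
  case base
  then show ?case by simp
next
  case (step x)
  have "25 * Suc x \<le> 26 * x" using step(1) by simp
  then have "(25 * Suc x) ^ 5 \<le> (26 * x) ^ 5" by (rule power_mono) simp
  then have "25 ^ 5 * Suc x ^ 5 \<le> 26 ^ 5 * x ^ 5" by (simp only: power_mult_distrib)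
  then have "Suc x ^ 5 \<le> 2 * x ^ 5" by simp
  also have "\<dots> \<le> 2 * 2 ^ x" using step(3) by simp
  finally show ?case by simp
qed

lemma prime_between_large_and_square:
  assumes x: "25 \<le> (x::nat)"
  shows "\<exists>q. prime q \<and> x < q \<and> q \<le> x^2"
proof (rule ccontr)
  assume no_prime: "\<not> ?thesis"
  define n where "n = x^2 div 2"
  have n_bounds: "x^2 \<le> 2*n + 1" "2*n \<le> x^2" unfolding n_def by auto
  have "25 * 25 \<le> x^2" using mult_le_mono[OF x x] by (simp add: power2_eq_square)
  then have n_pos: "1 \<le> n" using n_bounds by linarith
  have "\<forall>q. prime q \<and> q \<le> 2*n \<longrightarrow> q \<le> x"
    using no_prime n_bounds(2) by (meson le_trans not_le)
  \<comment> \<open>no primes in (x, x^2] make the central binomial coefficient far too small\<close>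
  then have "(2*n) choose n \<le> (2*n) ^ x" by (rule central_binomial_le_power[OF n_pos])
  then have "(4::nat) ^ n \<le> (2*n) ^ (x+1)"
    using four_pow_le_central_binomial[OF n_pos] by (simp add: mult_le_mono2 le_trans)
  also have "\<dots> \<le> (x^2) ^ (x+1)" using n_bounds by (intro power_mono) auto
  also have "\<dots> = x ^ (2*(x+1))" by (rule power_mult[symmetric])
  finally have "(2::nat) ^ (2*n) \<le> x ^ (2*x+2)" by (simp add: power_mult)
  then have "(2::nat) ^ (2*n*5) \<le> (x ^ 5) ^ (2*x+2)"
    by (metis power_mono power_mult zero_le mult.commute)
  also have "\<dots> \<le> (2 ^ x) ^ (2*x+2)" using pow5_le_two_pow[OF x] by (rule power_mono) simp
  also have "\<dots> = 2 ^ (x*(2*x+2))" by (rule power_mult[symmetric])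
  finally have "2*n*5 \<le> x*(2*x+2)" by simp
  moreover have "x*(2*x+2) = 2*(x*x) + 2*x" by (simp add: algebra_simps)
  moreover have "25 * x \<le> x * x" using x by (rule mult_right_mono) simp
  ultimately show False using x n_bounds(1) unfolding power2_eq_square by linarith
qed

lemma prime_between_and_square:
  assumes x: "2 \<le> (x::nat)"
  shows "\<exists>q. prime q \<and> x < q \<and> q \<le> x^2"
proof (cases "25 \<le> x")
  case True
  then show ?thesis by (rule prime_between_large_and_square)
next
  case False
  have witness: "\<exists>q. prime q \<and> x < q \<and> q \<le> x^2"
    if "prime p" "a \<le> x" "x < p" "p \<le> a^2" for p a :: nat
    using that le_trans[OF that(4) power_mono[OF that(2) zero_le]] by blast
  have primes: "prime (3::nat)" "prime (5::nat)" "prime (7::nat)" "prime (13::nat)"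
    "prime (23::nat)" "prime (29::nat)"
    by (simp_all add: prime_nat_iff' atLeastLessThan_nat_numeral)
  consider "x = 2" | "3 \<le> x" "x < 5" | "5 \<le> x" "x < 7" | "7 \<le> x" "x < 13"
    | "13 \<le> x" "x < 23" | "23 \<le> x" "x < 29"
    using x False by linarith
  then show ?thesis
  proof cases
    case 1 then show ?thesis using primes by (intro witness[of 3 2]) simp_all
  next
    case 2 then show ?thesis using primes by (intro witness[of 5 3]) simp_all
  next
    case 3 then show ?thesis using primes by (intro witness[of 7 5]) simp_all
  next
    case 4 then show ?thesis using primes by (intro witness[of 13 7]) simp_all
  next
    case 5 then show ?thesis using primes by (intro witness[of 23 13]) simp_all
  next
    case 6 then show ?thesis using primes by (intro witness[of 29 23]) simp_all
  qed
qed

section \<open>Consecutive primes\<close>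

definition consecutive_primes :: "nat \<Rightarrow> nat \<Rightarrow> bool" where
  "consecutive_primes p p' \<longleftrightarrow> prime p \<and> prime p' \<and> p < p' \<and> (\<forall>m. p < m \<and> m < p' \<longrightarrow> \<not> prime m)"

definition prime_count :: "nat \<Rightarrow> nat" where
  "prime_count x = card {p. prime p \<and> p \<le> x}"

lemma finite_primes_le: "finite {p::nat. prime p \<and> p \<le> x}"
  by (rule finite_subset[of _ "{..x}"]) auto

lemma next_prime_le_square:
  assumes "prime p"
  obtains p' where "consecutive_primes p p'" "p' \<le> p^2"
proof -
  obtain r where r: "prime r" "p < r" "r \<le> p^2"
    using prime_between_and_square prime_ge_2_nat[OF assms] by blast
  define p' where "p' = (LEAST r. prime r \<and> p < r)"
  have "prime p' \<and> p < p'" unfolding p'_def by (rule LeastI[of _ r]) (use r in simp)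
  moreover have "p' \<le> r" unfolding p'_def using r by (intro Least_le) simp
  moreover have "\<forall>m. p < m \<and> m < p' \<longrightarrow> \<not> prime m" unfolding p'_def using not_less_Least by blast
  ultimately show ?thesis using that assms r(3) by (auto simp: consecutive_primes_def)
qed

lemma greatest_prime_le:
  assumes "2 \<le> (x::nat)"
  obtains p where "prime p" "p \<le> x" "\<forall>m. p < m \<and> m \<le> x \<longrightarrow> \<not> prime m"
proof -
  define S where "S = {p. prime p \<and> p \<le> x}"
  have "finite S" "2 \<in> S" using assms finite_primes_le[of x] by (simp_all add: S_def)
  then have "Max S \<in> S" by (intro Max_in) auto
  have Max_ge: "m \<le> Max S" if "m \<in> S" for m using \<open>finite S\<close> that by (rule Max_ge)
  show ?thesis
  proof (rule that)
    show "prime (Max S)" "Max S \<le> x" using \<open>Max S \<in> S\<close> by (auto simp: S_def)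
    show "\<forall>m. Max S < m \<and> m \<le> x \<longrightarrow> \<not> prime m"
    proof (intro allI impI notI)
      fix m assume m: "Max S < m \<and> m \<le> x" "prime m"
      then have "m \<le> Max S" by (intro Max_ge) (simp add: S_def)
      with m(1) show False by simp
    qed
  qed
qed

lemma prime_count_pos:
  assumes "prime p"
  shows "1 \<le> prime_count p"
proof -
  have "{q. prime q \<and> q \<le> p} \<noteq> {}" using assms by blast
  then show ?thesis unfolding prime_count_def
    using finite_primes_le[of p] by (metis One_nat_def Suc_leI card_gt_0_iff)
qed

lemma nth_prime_prime_count:
  assumes "prime p"
  shows "nth_prime (prime_count p) = p"
  unfolding nth_prime_def prime_count_def
proof (rule Least_equality)
  fix y :: nat assume y: "prime y \<and> card {q. prime q \<and> q \<le> y} = card {q. prime q \<and> q \<le> p}"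
  show "p \<le> y"
  proof (rule ccontr)
    assume "\<not> p \<le> y"
    then have "{q. prime q \<and> q \<le> y} \<subset> {q. prime q \<and> q \<le> p}" using assms by auto
    then have "card {q. prime q \<and> q \<le> y} < card {q. prime q \<and> q \<le> p}"
      by (rule psubset_card_mono[OF finite_primes_le])
    then show False using y by simp
  qed
qed (use assms in simp)

lemma prime_count_consecutive:
  assumes "consecutive_primes p p'"
  shows "prime_count p' = Suc (prime_count p)"
proof -
  have "{q. prime q \<and> q \<le> p'} = insert p' {q. prime q \<and> q \<le> p}"
  proof (intro set_eqI iffI)
    fix x assume "x \<in> {q. prime q \<and> q \<le> p'}"
    then show "x \<in> insert p' {q. prime q \<and> q \<le> p}"
      using assms unfolding consecutive_primes_def by (metis insert_iff le_neq_implies_less mem_Collect_eq not_le)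
  qed (use assms in \<open>auto simp: consecutive_primes_def\<close>)
  moreover have "p' \<notin> {q. prime q \<and> q \<le> p}" using assms by (auto simp: consecutive_primes_def)
  ultimately show ?thesis unfolding prime_count_def using finite_primes_le by simp
qed

lemma consecutive_primes_enclosing:
  assumes "2 \<le> a" "\<forall>s. a < s \<and> s < b \<longrightarrow> \<not> prime s"
  obtains q q' where "consecutive_primes q q'" "q \<le> a" "b \<le> q'" "q' \<le> q^2"
proof -
  obtain q where q: "prime q" "q \<le> a" "\<forall>s. q < s \<and> s \<le> a \<longrightarrow> \<not> prime s"
    using assms(1) by (rule greatest_prime_le)
  obtain q' where q': "consecutive_primes q q'" "q' \<le> q^2"
    using q(1) by (rule next_prime_le_square)
  have "a < q'"
  proof (rule ccontr)
    assume "\<not> a < q'"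
    with q(3) q'(1) show False by (auto simp: consecutive_primes_def)
  qed
  with assms(2) q'(1) have "b \<le> q'" unfolding consecutive_primes_def by (meson not_less)
  with that q'(1) q(2) q'(2) show ?thesis by blast
qed

lemma consecutive_primes_le_max_prime_gap:
  assumes "consecutive_primes q q'" "a \<le> q" "q' \<le> b"
  shows "q' - q \<le> max_prime_gap a b"
proof -
  let ?G = "{q' - q | q q'. prime q \<and> prime q' \<and> a \<le> q \<and> q < q' \<and> q' \<le> b
       \<and> (\<forall>m. q < m \<and> m < q' \<longrightarrow> \<not> prime m)}"
  have "finite ?G" by (rule finite_subset[of _ "{..b}"]) auto
  moreover have "q' - q \<in> ?G" using assms unfolding consecutive_primes_def by blast
  ultimately show ?thesis unfolding max_prime_gap_def by (rule Max_ge)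
qed

lemma consecutive_primes_gap_le_d_sq:
  assumes "consecutive_primes p p'" "consecutive_primes q q'" "p' \<le> q" "q' \<le> p'^2"
  shows "q' - q \<le> d_sq (prime_count p)"
proof -
  have "nth_prime (prime_count p + 1) = p'"
    using assms(1) prime_count_consecutive nth_prime_prime_count
    by (metis Suc_eq_plus1 consecutive_primes_def)
  then show ?thesis
    unfolding d_sq_def using consecutive_primes_le_max_prime_gap[OF assms(2-4)] by simp
qed

lemma consecutive_primes_around_sqrt:
  assumes "prime q" "4 < N" "N \<le> q^2"
  obtains p p' where "consecutive_primes p p'" "p' \<le> q" "p^2 < N" "N \<le> p'^2"
proof -
  define p' where "p' = (LEAST p'. prime p' \<and> N \<le> p'^2)"
  have "prime p' \<and> N \<le> p'^2" unfolding p'_def by (rule LeastI[of _ q]) (use assms in simp)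
  then have p': "prime p'" "N \<le> p'^2" by auto
  have "p' \<le> q" unfolding p'_def by (rule Least_le) (use assms in simp)
  have "p' \<noteq> 2" using p'(2) assms(2) by auto
  with prime_ge_2_nat[OF p'(1)] have "2 \<le> p' - 1" by linarith
  then obtain p where p: "prime p" "p \<le> p' - 1" "\<forall>m. p < m \<and> m \<le> p' - 1 \<longrightarrow> \<not> prime m"
    by (rule greatest_prime_le)
  have "p < p'" using p(2) \<open>2 \<le> p' - 1\<close> by linarith
  have "consecutive_primes p p'"
    unfolding consecutive_primes_def
  proof (intro conjI allI impI p(1) p'(1) \<open>p < p'\<close>)
    fix m assume "p < m \<and> m < p'"
    then have "p < m \<and> m \<le> p' - 1" by linarith
    with p(3) show "\<not> prime m" by blast
  qed
  moreover have "\<not> (prime p \<and> N \<le> p^2)"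
    using \<open>p < p'\<close> unfolding p'_def by (rule not_less_Least)
  then have "p^2 < N" using p(1) by simp
  ultimately show ?thesis using that \<open>p' \<le> q\<close> p'(2) by blast
qed

lemma gap_across_consecutive_squares:
  fixes m q q' p :: nat
  assumes "q < m^2" "(m+1)^2 \<le> q'" "p^2 < q'"
  shows "q + 2*p < q'"
proof (cases "p \<le> m")
  case True
  then show ?thesis using assms(1,2) by (simp add: power2_eq_square algebra_simps)
next
  case False
  then obtain k where k: "p = Suc k" "m \<le> k" by (cases p) auto
  then have "m * m \<le> k * k" by (intro mult_le_mono)
  then show ?thesis using assms(1,3) k(1) by (simp add: power2_eq_square algebra_simps)
qed

lemma prime_gap_le_twice_prime_below_sqrt:
  assumes "\<forall>r::nat. r \<ge> 1 \<longrightarrow> d_sq r \<le> 2 * nth_prime r"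
    and "consecutive_primes q q'" "4 < q'" "q' \<le> q^2"
  obtains p where "prime p" "p^2 < q'" "q' - q \<le> 2 * p"
proof -
  from assms(2) have "prime q" by (simp add: consecutive_primes_def)
  then obtain p p' where pp: "consecutive_primes p p'" "p' \<le> q" "p^2 < q'" "q' \<le> p'^2"
    using assms(3,4) by (rule consecutive_primes_around_sqrt)
  then have "prime p" by (simp add: consecutive_primes_def)
  have "q' - q \<le> d_sq (prime_count p)"
    by (rule consecutive_primes_gap_le_d_sq[OF pp(1) assms(2) pp(2,4)])
  also have "\<dots> \<le> 2 * p"
    using assms(1) prime_count_pos[OF \<open>prime p\<close>] nth_prime_prime_count[OF \<open>prime p\<close>] by metis
  finally show ?thesis using that \<open>prime p\<close> pp(3) by blast
qed

theorem mainTheorem3: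
  assumes "\<forall>r::nat. r \<ge> 1 \<longrightarrow> d_sq r \<le> 2 * nth_prime r"
  shows "\<forall>n::nat. n \<ge> 1 \<longrightarrow> (\<exists>p. prime p \<and> n^2 < p \<and> p < (n + 1)^2)"
proof (intro allI impI)
  fix m :: nat assume "m \<ge> 1"
  show "\<exists>p. prime p \<and> m^2 < p \<and> p < (m + 1)^2"
  proof (cases "m = 1")
    case True
    then show ?thesis by (intro exI[of _ 2]) (simp add: power2_eq_square)
  next
    case False
    with \<open>m \<ge> 1\<close> have "4 \<le> m^2" using power_mono[of 2 m 2] by simp
    show ?thesis
    proof (rule ccontr)
      assume "\<not> ?thesis"
      then have "\<forall>s. m^2 < s \<and> s < (m+1)^2 \<longrightarrow> \<not> prime s" by blast
      moreover have "2 \<le> m^2" using \<open>4 \<le> m^2\<close> by simp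
      ultimately obtain q q' where qq: "consecutive_primes q q'" "q \<le> m^2" "(m+1)^2 \<le> q'" "q' \<le> q^2"
        by (elim consecutive_primes_enclosing[rotated])
      have "q < m^2" using qq(1,2) prime_power_iff[of m 2] by (auto simp: consecutive_primes_def le_less)
      have "4 < q'" using \<open>4 \<le> m^2\<close> qq(3) power_strict_mono[of m "m+1" 2] by simp
      with assms qq(1) obtain p where p: "p^2 < q'" "q' - q \<le> 2 * p"
        using qq(4) by (rule prime_gap_le_twice_prime_below_sqrt)
      show False using gap_across_consecutive_squares[OF \<open>q < m^2\<close> qq(3) p(1)] p(2) by linarith
    qed
  qed
qed

end
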